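(* Let $a,x,u,v$ be integers with $3\le a\le x$, $0\le u\le a-3$, and $u+2\le v\le\min\left(a-1,\frac{a(x-1)}{x}\right)$. Let $\lambda$ consist of $ua+v$ parts equal to $x$ and $v-(u+1)$ parts equal to $ax$, and let $n=|\lambda|$, so that $n=x[(a+1)(v-1)+1]$ and $n-1=xa(v-1)+xv-1$. For $0\le i\le n-2$ write uniquely $i=\frac{n}{x}r_i+(v-1)p_i+q_i$ with integers $0\le r_i<x$, $0\le p_i<a+2$, $0\le q_i<v-1$, $0\le (v-1)p_i+q_i<n/x$. Let $f(i)=ar_i-(xv-1)p_i+xaq_i$ and, for $k\in\mathbb{Z}$, $F_k=\{i\in\{1,\dots,n-2\}:k=-\lfloor f(i)/(n-1)\rfloor\}$. Then $\{1,\dots,n-2\}=F_0\uplus F_1\uplus F_2$, i.e. $F_k=\emptyset$ for $k\notin\{0,1,2\}$. *)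

theory Defs
  imports Complex_Main
begin

definition part_size :: "int \<Rightarrow> int \<Rightarrow> int \<Rightarrow> int \<Rightarrow> int" where
  "part_size a x u v = (u*a + v) * x + (v - (u+1)) * (a*x)"

text \<open>The unique decomposition i = (n/x) r + (v-1) p + q with 0 <= q < v-1 and
  0 <= (v-1) p + q < n/x, 0 <= r < x (here n/x is the integer (a+1)(v-1)+1).\<close>
definition r_idx :: "int \<Rightarrow> int \<Rightarrow> int \<Rightarrow> int \<Rightarrow> int \<Rightarrow> int" where
  "r_idx a x u v i = i div (part_size a x u v div x)"

definition p_idx :: "int \<Rightarrow> int \<Rightarrow> int \<Rightarrow> int \<Rightarrow> int \<Rightarrow> int" where
  "p_idx a x u v i = (i mod (part_size a x u v div x)) div (v - 1)"

definition q_idx :: "int \<Rightarrow> int \<Rightarrow> int \<Rightarrow> int \<Rightarrow> int \<Rightarrow> int" where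
  "q_idx a x u v i = (i mod (part_size a x u v div x)) mod (v - 1)"

definition f_fun :: "int \<Rightarrow> int \<Rightarrow> int \<Rightarrow> int \<Rightarrow> int \<Rightarrow> int" where
  "f_fun a x u v i = a * r_idx a x u v i - (x*v - 1) * p_idx a x u v i + x*a * q_idx a x u v i"

definition F_set :: "int \<Rightarrow> int \<Rightarrow> int \<Rightarrow> int \<Rightarrow> int \<Rightarrow> int set" where
  "F_set a x u v k = {i \<in> {1..part_size a x u v - 2}.
      k = - \<lfloor>real_of_int (f_fun a x u v i) / real_of_int (part_size a x u v - 1)\<rfloor>}"

end

theory Submission
  imports Defs
begin

text \<open>Put \<open>N = n - 1 = x a (v-1) + x v - 1\<close>. The digits satisfy \<open>0 \<le> r \<le> x-1\<close>,
  \<open>0 \<le> p \<le> a+1\<close> and \<open>0 \<le> q \<le> v-2\<close>; maximising resp. minimising \<open>f\<close> digit by digit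
  gives \<open>-2N \<le> f(i) < N\<close>, hence \<open>\<lfloor>f(i)/N\<rfloor> \<in> {-2,-1,0}\<close>.\<close>

lemma part_size_eq: "part_size a x u v = x * ((a + 1) * (v - 1) + 1)"
  unfolding part_size_def by (simp add: algebra_simps)

lemma part_size_minus_one: "part_size a x u v - 1 = x * a * (v - 1) + x * v - 1"
  by (simp add: part_size_eq algebra_simps)

lemma int_div_less_of_less_mult:
  fixes i m x :: int
  assumes "0 < m" "i < x * m"
  shows "i div m < x"
proof -
  have "i div m * m \<le> i"
    using pos_mod_sign[OF assms(1), of i] by (simp flip: minus_mod_eq_div_mult)
  then show ?thesis
    using assms by (metis le_less_trans mult_less_cancel_right_pos)
qed

lemma
  fixes a x u v i :: int
  assumes "0 \<le> a" "0 < x" "2 \<le> v" "0 \<le> i" "i < part_size a x u v"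
  shows r_idx_bounds: "0 \<le> r_idx a x u v i" "r_idx a x u v i \<le> x - 1"
    and p_idx_bounds: "0 \<le> p_idx a x u v i" "p_idx a x u v i \<le> a + 1"
    and q_idx_bounds: "0 \<le> q_idx a x u v i" "q_idx a x u v i \<le> v - 2"
proof -
  define m where "m = (a + 1) * (v - 1) + 1"
  have m_pos: "0 < m"
    using assms by (simp add: m_def add_pos_nonneg)
  have block: "part_size a x u v div x = m"
    using assms(2) by (simp add: part_size_eq m_def)
  have "i div m < x"
    using assms(5) m_pos by (intro int_div_less_of_less_mult) (simp_all add: part_size_eq m_def)
  then show "0 \<le> r_idx a x u v i" "r_idx a x u v i \<le> x - 1"
    using assms(4) m_pos by (simp_all add: r_idx_def block pos_imp_zdiv_nonneg_iff)
  have "i mod m \<le> (a + 1) * (v - 1)"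
    using pos_mod_bound[OF m_pos, of i] by (simp add: m_def)
  then have "i mod m div (v - 1) \<le> (a + 1) * (v - 1) div (v - 1)"
    using assms(3) by (intro zdiv_mono1) simp_all
  then show "0 \<le> p_idx a x u v i" "p_idx a x u v i \<le> a + 1"
    using assms(3) m_pos by (simp_all add: p_idx_def block pos_imp_zdiv_nonneg_iff)
  show "0 \<le> q_idx a x u v i" "q_idx a x u v i \<le> v - 2"
  proof -
    have "0 < v - 1"
      using assms(3) by simp
    then have "0 \<le> i mod m mod (v - 1)" "i mod m mod (v - 1) < v - 1"
      by (rule pos_mod_sign, rule pos_mod_bound)
    then show "0 \<le> q_idx a x u v i" "q_idx a x u v i \<le> v - 2"
      unfolding q_idx_def block by linarith+
  qed
qed

lemma part_size_gt_one:
  fixes a x u v :: int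
  assumes "0 \<le> a" "0 < x" "2 \<le> v"
  shows "1 < part_size a x u v"
proof -
  have "2 \<le> x * v"
    using mult_mono[of 1 x 2 v] assms(2,3) by simp
  moreover have "0 \<le> x * a * (v - 1)"
    using assms by simp
  ultimately show ?thesis
    using part_size_minus_one[of a x u v] by linarith
qed

lemma f_fun_bounds:
  fixes a x u v i :: int
  assumes "0 \<le> a" "0 < x" "2 \<le> v" "0 \<le> i" "i < part_size a x u v"
  shows "- 2 * (part_size a x u v - 1) \<le> f_fun a x u v i"
    and "f_fun a x u v i < part_size a x u v - 1"
proof -
  note bounds = r_idx_bounds[OF assms] p_idx_bounds[OF assms] q_idx_bounds[OF assms]
  have xv: "2 \<le> x * v"
    using mult_mono[of 1 x 2 v] assms(2,3) by simp
  have "f_fun a x u v i \<le> a * (x - 1) - (x * v - 1) * 0 + x * a * (v - 2)"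
    unfolding f_fun_def using bounds assms xv
    by (intro add_mono diff_mono mult_left_mono) simp_all
  then show "f_fun a x u v i < part_size a x u v - 1"
    unfolding part_size_minus_one using assms xv by (simp add: algebra_simps)
  have lower: "a * 0 - (x * v - 1) * (a + 1) + x * a * 0 \<le> f_fun a x u v i"
    unfolding f_fun_def using bounds assms xv
    by (intro add_mono diff_mono mult_left_mono) simp_all
  have "- 2 * (part_size a x u v - 1) = - 2 * (x * a * (v - 1) + x * v - 1)"
    by (simp only: part_size_minus_one)
  also have "\<dots> \<le> a * 0 - (x * v - 1) * (a + 1) + x * a * 0"
  proof -
    have "a * 0 - (x * v - 1) * (a + 1) + x * a * 0 - (- 2 * (x * a * (v - 1) + x * v - 1))
        = x * a * (v - 2) + (x * v - 2) + (a + 1)"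
      by (simp add: algebra_simps)
    moreover have "0 \<le> x * a * (v - 2)"
      using assms by simp
    ultimately show ?thesis
      using assms(1) xv by linarith
  qed
  also note lower
  finally show "- 2 * (part_size a x u v - 1) \<le> f_fun a x u v i" .
qed

lemma neg_floor_quotient_in_range:
  fixes g N :: int
  assumes "0 < N" "- 2 * N \<le> g" "g < N"
  shows "- \<lfloor>real_of_int g / real_of_int N\<rfloor> \<in> {0, 1, 2}"
proof -
  have "g div N < 1"
    using assms by (intro int_div_less_of_less_mult) simp_all
  moreover have "- 2 * N div N = - 2"
    using assms(1) by (metis less_irrefl nonzero_mult_div_cancel_right)
  moreover have "- 2 * N div N \<le> g div N"
    by (rule zdiv_mono1[OF assms(2,1)])
  ultimately show ?thesis
    by (auto simp only: floor_divide_of_int_eq)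
qed

theorem proposition4p8:
  fixes a x u v :: int
  assumes "3 \<le> a" "a \<le> x" "0 \<le> u" "u \<le> a - 3"
    and "u + 2 \<le> v" "v \<le> a - 1"
    and "real_of_int v \<le> real_of_int (a * (x - 1)) / real_of_int x"
  shows "{1..part_size a x u v - 2} = F_set a x u v 0 \<union> F_set a x u v 1 \<union> F_set a x u v 2
    \<and> (\<forall>k. k \<notin> {0, 1, 2} \<longrightarrow> F_set a x u v k = {})"
proof -
  have a: "0 \<le> a" and x: "0 < x" and v: "2 \<le> v"
    using assms(1-5) by simp_all
  have "0 < part_size a x u v - 1"
    using part_size_gt_one[OF a x v] by simp
  define level where
    "level i = - \<lfloor>real_of_int (f_fun a x u v i) / real_of_int (part_size a x u v - 1)\<rfloor>" for i
  have "level i \<in> {0, 1, 2}" if "i \<in> {1..part_size a x u v - 2}" for i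
    unfolding level_def using that f_fun_bounds[OF a x v, of i] \<open>0 < part_size a x u v - 1\<close>
    by (intro neg_floor_quotient_in_range) simp_all
  moreover have "F_set a x u v k = {i \<in> {1..part_size a x u v - 2}. k = level i}" for k
    unfolding F_set_def level_def ..
  ultimately show ?thesis
    by (fastforce simp del: insert_iff)
qed

end
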